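(* Let $X$ be a cubic vertex-transitive graph for which $1$ is a simple eigenvalue, and let $\mathbf{z}$ be an eigenvector for the eigenvalue $1$ all of whose entries lie in $\{1,-1\}$. Let $V^+=\{x\in V(X)\mid \mathbf{z}(x)=1\}$, $V^-=\{x\in V(X)\mid \mathbf{z}(x)=-1\}$, and let $M$ be the set of edges of $X$ with one end in $V^+$ and the other in $V^-$. Then: (i) the induced subgraph $X[V^+]$ is a disjoint union of cycles all of the same length; (ii) $X[V^+]$ is isomorphic to $X[V^-]$, and $V^+$ and $V^-$ are blocks of imprimitivity of the action of $\mathrm{Aut}(X)$ on $V(X)$; (iii) $\{V^+,V^-\}$ is the unique partition of $V(X)$ into two parts such that both parts induce $2$-regular subgraphs of $X$; (iv) $M$ is a perfect matching of $X$; (v) $\mathrm{Aut}(X)$ fixes $M$ set-wise and acts transitively on the arcs of $M$ (ordered pairs $(x,y)$ with $xy\in M$).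
   Context: Eigenvalues are those of the adjacency matrix; an eigenvalue is simple if its eigenspace is $1$-dimensional. (For a vertex-transitive graph with a simple eigenvalue, an eigenvector with all entries $\pm1$ exists after scaling.) $X[W]$ denotes the subgraph induced by $W\subseteq V(X)$. *)

theory Defs
  imports "HOL-Analysis.Analysis"
begin

text \<open>Finite simple graphs on a finite vertex type 'a, given by an adjacency relation E.\<close>

definition simple_graph :: "('a \<Rightarrow> 'a \<Rightarrow> bool) \<Rightarrow> bool" where
  "simple_graph E \<longleftrightarrow> (\<forall>x y. E x y \<longrightarrow> E y x) \<and> (\<forall>x. \<not> E x x)"

definition cubic :: "('a \<Rightarrow> 'a \<Rightarrow> bool) \<Rightarrow> bool" where
  "cubic E \<longleftrightarrow> (\<forall>x. card {y. E x y} = 3)"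

definition automorphisms :: "('a \<Rightarrow> 'a \<Rightarrow> bool) \<Rightarrow> ('a \<Rightarrow> 'a) set" where
  "automorphisms E = {g. bij g \<and> (\<forall>x y. E x y \<longleftrightarrow> E (g x) (g y))}"

definition vertex_transitive :: "('a \<Rightarrow> 'a \<Rightarrow> bool) \<Rightarrow> bool" where
  "vertex_transitive E \<longleftrightarrow> (\<forall>x y. \<exists>g\<in>automorphisms E. g x = y)"

definition adj_matrix :: "('a::finite \<Rightarrow> 'a \<Rightarrow> bool) \<Rightarrow> real^'a^'a" where
  "adj_matrix E = (\<chi> i j. if E i j then 1 else 0)"

definition eigenspace :: "real^'a^'a \<Rightarrow> real \<Rightarrow> (real^'a) set" where
  "eigenspace A c = {v. A *v v = c *\<^sub>R v}"

definition simple_eigenvalue :: "real^'a^'a \<Rightarrow> real \<Rightarrow> bool" where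
  "simple_eigenvalue A c \<longleftrightarrow> dim (eigenspace A c) = 1"

definition induced_adj :: "('a \<Rightarrow> 'a \<Rightarrow> bool) \<Rightarrow> 'a set \<Rightarrow> 'a \<Rightarrow> 'a \<Rightarrow> bool" where
  "induced_adj E S u v \<longleftrightarrow> E u v \<and> u \<in> S \<and> v \<in> S"

definition component :: "('a \<Rightarrow> 'a \<Rightarrow> bool) \<Rightarrow> 'a set \<Rightarrow> 'a \<Rightarrow> 'a set" where
  "component E S x = {y. (induced_adj E S)\<^sup>*\<^sup>* x y}"

definition induces_cycle :: "('a \<Rightarrow> 'a \<Rightarrow> bool) \<Rightarrow> 'a set \<Rightarrow> nat \<Rightarrow> bool" where
  "induces_cycle E C k \<longleftrightarrow> k \<ge> 3 \<and> (\<exists>vs. length vs = k \<and> distinct vs \<and> set vs = C \<and>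
     (\<forall>u\<in>C. \<forall>v\<in>C. E u v \<longleftrightarrow>
        (\<exists>i<k. (u = vs ! i \<and> v = vs ! ((i + 1) mod k)) \<or> (v = vs ! i \<and> u = vs ! ((i + 1) mod k)))))"

definition union_of_equal_cycles :: "('a \<Rightarrow> 'a \<Rightarrow> bool) \<Rightarrow> 'a set \<Rightarrow> bool" where
  "union_of_equal_cycles E S \<longleftrightarrow> (\<exists>k. \<forall>x\<in>S. induces_cycle E (component E S x) k)"

definition induced_isomorphic :: "('a \<Rightarrow> 'a \<Rightarrow> bool) \<Rightarrow> 'a set \<Rightarrow> 'a set \<Rightarrow> bool" where
  "induced_isomorphic E S T \<longleftrightarrow>
     (\<exists>f. bij_betw f S T \<and> (\<forall>x\<in>S. \<forall>y\<in>S. E x y \<longleftrightarrow> E (f x) (f y)))"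

definition block :: "('a \<Rightarrow> 'a) set \<Rightarrow> 'a set \<Rightarrow> bool" where
  "block G B \<longleftrightarrow> B \<noteq> {} \<and> (\<forall>g\<in>G. g ` B = B \<or> g ` B \<inter> B = {})"

definition two_regular_induced :: "('a \<Rightarrow> 'a \<Rightarrow> bool) \<Rightarrow> 'a set \<Rightarrow> bool" where
  "two_regular_induced E S \<longleftrightarrow> (\<forall>x\<in>S. card {y\<in>S. E x y} = 2)"

definition two_partition :: "'a set \<Rightarrow> 'a set \<Rightarrow> bool" where
  "two_partition P Q \<longleftrightarrow> P \<noteq> {} \<and> Q \<noteq> {} \<and> P \<inter> Q = {} \<and> P \<union> Q = UNIV"

definition edges :: "('a \<Rightarrow> 'a \<Rightarrow> bool) \<Rightarrow> 'a set set" where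
  "edges E = {{x, y} | x y. E x y}"

definition perfect_matching :: "('a \<Rightarrow> 'a \<Rightarrow> bool) \<Rightarrow> 'a set set \<Rightarrow> bool" where
  "perfect_matching E M \<longleftrightarrow> M \<subseteq> edges E \<and> (\<forall>v. \<exists>!e. e \<in> M \<and> v \<in> e)"

end

theory Submission
  imports Defs
begin

(* Since X is cubic and z has entries +-1, (A z)(x) = (3 - 2 d(x)) z(x), where d(x) counts the
   neighbours of x at which z has the other sign. So A z = z says precisely that every vertex has
   exactly one neighbour of the other sign: X[V+] and X[V-] are 2-regular, hence disjoint unions of
   cycles, and the edges between them form a perfect matching M. Conversely, any partition into two
   parts inducing 2-regular subgraphs gives a +-1 eigenvector for the eigenvalue 1, which by
   simplicity is +-z; this is the uniqueness in (iii). An automorphism g turns z into the +-1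
   eigenvector z o g = +-z, so g fixes or swaps V+ and V-. With vertex-transitivity this yields the
   blocks, the isomorphism of X[V+] with X[V-], the common cycle length and, since the M-partner of a
   vertex is unique, the transitivity on the arcs of M. *)

section \<open>Cycles in 2-regular induced subgraphs\<close>

lemma simple_graph_sym: "simple_graph E \<Longrightarrow> E x y \<Longrightarrow> E y x"
  by (simp add: simple_graph_def)

lemma simple_graph_irrefl: "simple_graph E \<Longrightarrow> \<not> E x x"
  by (simp add: simple_graph_def)

lemma automorphism_bij: "g \<in> automorphisms E \<Longrightarrow> bij g"
  by (simp add: automorphisms_def)

lemma automorphism_adj: "g \<in> automorphisms E \<Longrightarrow> E (g x) (g y) \<longleftrightarrow> E x y"
  by (simp add: automorphisms_def)

lemma two_regular_induced_other_nbr: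
  assumes "two_regular_induced E S" "x \<in> S" "p \<in> S" "E x p"
  shows "\<exists>y. y \<in> S \<and> E x y \<and> y \<noteq> p"
proof -
  from assms(1,2) have "card {y\<in>S. E x y} = 2" by (simp add: two_regular_induced_def)
  then obtain a b where "{y\<in>S. E x y} = {a, b}" "a \<noteq> b" by (auto simp: card_2_iff)
  with assms(3,4) show ?thesis by blast
qed

lemma two_regular_induced_nbrs_eq:
  assumes "two_regular_induced E S" "x \<in> S" "{u, v} \<subseteq> {y\<in>S. E x y}" "u \<noteq> v"
  shows "{y\<in>S. E x y} = {u, v}"
proof -
  have "card {y\<in>S. E x y} = 2" using assms(1,2) by (simp add: two_regular_induced_def)
  then show ?thesis
    using assms(3,4) card_subset_eq[of "{y\<in>S. E x y}" "{u, v}"] card.infinite by fastforce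
qed

(* In a 2-regular X[S] the SOME below picks the unique neighbour in S other than the previous vertex. *)
fun nonbacktracking_walk :: "('a \<Rightarrow> 'a \<Rightarrow> bool) \<Rightarrow> 'a set \<Rightarrow> 'a \<Rightarrow> 'a \<Rightarrow> nat \<Rightarrow> 'a" where
  "nonbacktracking_walk E S x a 0 = x"
| "nonbacktracking_walk E S x a (Suc 0) = a"
| "nonbacktracking_walk E S x a (Suc (Suc n)) =
     (SOME y. y \<in> S \<and> E (nonbacktracking_walk E S x a (Suc n)) y
                    \<and> y \<noteq> nonbacktracking_walk E S x a n)"

declare nonbacktracking_walk.simps(3) [simp del]

locale two_regular_walk =
  fixes E :: "'a::finite \<Rightarrow> 'a \<Rightarrow> bool" and S :: "'a set" and x a :: 'a
  assumes simple: "simple_graph E" and two_regular: "two_regular_induced E S"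
    and start: "x \<in> S" "a \<in> S" "E x a"
begin

abbreviation w :: "nat \<Rightarrow> 'a" where
  "w \<equiv> nonbacktracking_walk E S x a"

lemma walk_Suc_Suc:
  assumes "w n \<in> S" "w (Suc n) \<in> S" "E (w n) (w (Suc n))"
  shows "w (Suc (Suc n)) \<in> S \<and> E (w (Suc n)) (w (Suc (Suc n))) \<and> w (Suc (Suc n)) \<noteq> w n"
  unfolding nonbacktracking_walk.simps(3)
  using two_regular_induced_other_nbr[OF two_regular assms(2,1) simple_graph_sym[OF simple assms(3)]]
  by (rule someI_ex)

lemma walk_in_adj: "w n \<in> S \<and> w (Suc n) \<in> S \<and> E (w n) (w (Suc n))"
  by (induction n) (use start walk_Suc_Suc in auto)

lemma walk_in: "w n \<in> S"
  using walk_in_adj by blast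

lemma walk_adj: "E (w n) (w (Suc n))"
  using walk_in_adj by blast

lemma walk_nonbacktracking: "w (Suc (Suc n)) \<noteq> w n"
  using walk_Suc_Suc walk_in_adj by blast

lemma walk_nbrs: "{y\<in>S. E (w (Suc n)) y} = {w n, w (Suc (Suc n))}"
  using walk_in walk_adj simple_graph_sym[OF simple walk_adj] not_sym[OF walk_nonbacktracking]
  by (intro two_regular_induced_nbrs_eq[OF two_regular]) auto

lemma walk_shift:
  assumes "w k = w k'" "w (Suc k) = w (Suc k')"
  shows "w (k + i) = w (k' + i)"
proof -
  have "w (k + i) = w (k' + i) \<and> w (Suc (k + i)) = w (Suc (k' + i))"
  proof (induction i)
    case (Suc i)
    have "w (Suc (Suc (k + i))) \<in> {y\<in>S. E (w (Suc (k' + i))) y}"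
      using Suc.IH walk_in walk_adj[of "Suc (k + i)"] by simp
    then show ?case
      using Suc.IH walk_nbrs[of "k' + i"] walk_nonbacktracking[of "k + i"] by auto
  qed (use assms in simp)
  then show ?thesis ..
qed

(* A first repetition w n = w m with m > 0 would give w m a third neighbour w (n - 1) in S. *)
lemma walk_first_repeat_is_start:
  assumes repeat: "m < n" "w n = w m"
    and first: "\<And>i j. i < j \<Longrightarrow> j < n \<Longrightarrow> w j \<noteq> w i"
  shows "m = 0"
proof (rule ccontr)
  assume "m \<noteq> 0"
  then obtain m' n' where m': "m = Suc m'" and n': "n = Suc n'"
    using repeat(1) by (metis not0_implies_Suc not_less0)
  have "w n' \<in> {y\<in>S. E (w (Suc m')) y}"
    using walk_in simple_graph_sym[OF simple walk_adj[of n']] repeat(2) m' n' by simp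
  then have nbr: "w n' = w m' \<or> w n' = w (Suc (Suc m'))"
    using walk_nbrs by auto
  consider "n' = Suc m'" | "n' = Suc (Suc m')" | "Suc (Suc m') < n'"
    using repeat(1) m' n' by linarith
  then show False
  proof cases
    case 1
    then show False
      using walk_adj[of n'] simple_graph_irrefl[OF simple] repeat(2) m' n' by simp
  next
    case 2
    then show False
      using walk_nonbacktracking[of "Suc m'"] repeat(2) m' n' by simp
  next
    case 3
    then show False
      using nbr first[of m' n'] first[of "Suc (Suc m')" n'] n' by auto
  qed
qed

lemma walk_closes: "\<exists>n\<ge>3. w n = x \<and> inj_on w {..<n}"
proof -
  have "\<not> inj w"
    using finite_imageD[of w UNIV] by auto
  then have "\<exists>n. \<exists>m<n. w n = w m"
    unfolding inj_def by (metis linorder_neqE_nat)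
  then obtain n m where repeat: "m < n" "w n = w m"
    and first: "\<And>i j. i < j \<Longrightarrow> j < n \<Longrightarrow> w j \<noteq> w i"
    using exists_least_iff[of "\<lambda>n. \<exists>m<n. w n = w m"] by blast
  then have "m = 0"
    by (rule walk_first_repeat_is_start)
  have "n \<noteq> 1"
    using start(3) simple_graph_irrefl[OF simple] repeat(2) \<open>m = 0\<close> by auto
  moreover have "n \<noteq> 2"
    using walk_nonbacktracking[of 0] repeat(2) \<open>m = 0\<close> by (auto simp: numeral_2_eq_2)
  ultimately have "n \<ge> 3"
    using repeat(1) by linarith
  moreover have "inj_on w {..<n}"
    using first by (intro inj_onI) (metis lessThan_iff linorder_neqE_nat)
  ultimately show ?thesis
    using repeat(2) \<open>m = 0\<close> by auto
qed

context
  fixes n :: nat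
  assumes closed: "n \<ge> 3" "w n = x" and distinct: "inj_on w {..<n}"
begin

lemma walk_add_period: "w (n + i) = w i"
proof -
  have "{w (n - 1), w (Suc n)} = {y\<in>S. E (w n) y}"
    using walk_nbrs[of "n - 1"] closed(1) by (simp add: Suc_diff_le numeral_eq_Suc)
  moreover have "w 1 \<in> {y\<in>S. E (w n) y}"
    using start closed(2) by simp
  moreover have "w 1 \<noteq> w (n - 1)"
    using distinct closed(1) by (auto dest: inj_onD[of w _ 1 "n - 1"])
  ultimately have "w (Suc n) = w (Suc 0)"
    by auto
  then show ?thesis
    using walk_shift[of n 0 i] closed(2) by simp
qed

lemma walk_mod: "w (i mod n) = w i"
proof -
  have "w (q * n + r) = w r" for q r
    by (induction q) (simp_all add: add.assoc walk_add_period)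
  then show ?thesis
    using div_mult_mod_eq[of i n] by metis
qed

lemma walk_nbrs_mod: "{y\<in>S. E (w i) y} = {w ((i + n - 1) mod n), w ((i + 1) mod n)}"
proof -
  have "Suc (i + n - 1) = n + i" "Suc (Suc (i + n - 1)) = n + Suc i"
    using closed(1) by simp_all
  then show ?thesis
    using walk_nbrs[of "i + n - 1"] walk_add_period[of "Suc i", simplified]
    by (simp add: walk_mod walk_add_period)
qed

lemma component_walk: "component E S x = w ` {..<n}"
proof -
  have range: "w ` {..<n} = range w"
  proof
    show "range w \<subseteq> w ` {..<n}"
    proof
      fix y assume "y \<in> range w"
      then obtain i where "y = w i" by blast
      moreover have "i mod n \<in> {..<n}" using closed(1) by simp
      ultimately show "y \<in> w ` {..<n}" by (metis walk_mod imageI)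
    qed
  qed auto
  have "(induced_adj E S)\<^sup>*\<^sup>* x (w i)" for i
  proof (induction i)
    case (Suc i)
    then show ?case
      using walk_in walk_adj by (auto simp: induced_adj_def intro: rtranclp.rtrancl_into_rtrancl)
  qed simp
  moreover have "y \<in> range w" if "(induced_adj E S)\<^sup>*\<^sup>* x y" for y
    using that
  proof (induction rule: rtranclp_induct)
    case base
    then show ?case by (metis nonbacktracking_walk.simps(1) rangeI)
  next
    case (step u v)
    then obtain i where "u = w i" by blast
    with step(2) have "v \<in> {y\<in>S. E (w i) y}"
      by (simp add: induced_adj_def)
    then show ?case
      unfolding walk_nbrs_mod by blast
  qed
  ultimately show ?thesis
    unfolding range component_def by blast
qed

lemma walk_induces_cycle: "induces_cycle E (w ` {..<n}) n"
  unfolding induces_cycle_def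
proof (intro conjI exI[of _ "map w [0..<n]"])
  let ?vs = "map w [0..<n]"
  have nth: "?vs ! (i mod n) = w i" for i
    using closed(1) walk_mod[of i] by simp
  show "distinct ?vs" "set ?vs = w ` {..<n}"
    using distinct by (simp_all add: distinct_map atLeast_upt)
  show "\<forall>u\<in>w ` {..<n}. \<forall>v\<in>w ` {..<n}. E u v \<longleftrightarrow>
          (\<exists>i<n. u = ?vs ! i \<and> v = ?vs ! ((i + 1) mod n) \<or> v = ?vs ! i \<and> u = ?vs ! ((i + 1) mod n))"
  proof (intro ballI iffI)
    fix u v assume "u \<in> w ` {..<n}" "v \<in> w ` {..<n}" "E u v"
    then obtain i where i: "i < n" "u = w i" and "v \<in> {y\<in>S. E (w i) y}"
      using walk_in by auto
    then consider "v = w ((i + 1) mod n)" | "v = w ((i + n - 1) mod n)"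
      unfolding walk_nbrs_mod by blast
    then show "\<exists>i<n. u = ?vs ! i \<and> v = ?vs ! ((i + 1) mod n) \<or> v = ?vs ! i \<and> u = ?vs ! ((i + 1) mod n)"
    proof cases
      case 1
      then show ?thesis
        using i nth[of i] nth[of "i + 1"] walk_mod[of "i + 1"] by auto
    next
      case 2
      let ?j = "(i + n - 1) mod n"
      have "Suc ?j mod n = i"
        using i(1) closed(1) by (simp add: mod_Suc_eq)
      then show ?thesis
        using 2 i nth[of ?j] nth[of "Suc ?j"] closed(1)
        by (intro exI[of _ ?j]) auto
    qed
  next
    fix u v
    assume "\<exists>i<n. u = ?vs ! i \<and> v = ?vs ! ((i + 1) mod n) \<or> v = ?vs ! i \<and> u = ?vs ! ((i + 1) mod n)"
    then obtain i where "u = w i \<and> v = w (i + 1) \<or> v = w i \<and> u = w (i + 1)"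
      using nth[of "i + 1" for i] nth[of i for i] by (metis mod_less)
    then show "E u v"
      using walk_adj simple_graph_sym[OF simple] by auto
  qed
qed (use closed(1) in simp_all)

end

end

lemma component_induces_cycle:
  fixes E :: "'a::finite \<Rightarrow> 'a \<Rightarrow> bool"
  assumes "simple_graph E" "two_regular_induced E S" "x \<in> S"
  shows "induces_cycle E (component E S x) (card (component E S x))"
proof -
  have "card {y\<in>S. E x y} = 2"
    using assms(2,3) by (simp add: two_regular_induced_def)
  then obtain a where "a \<in> S" "E x a"
    by (metis (no_types, lifting) card.empty empty_Collect_eq zero_neq_numeral)
  then interpret two_regular_walk E S x a
    using assms by unfold_locales
  obtain n where "n \<ge> 3" "w n = x" "inj_on w {..<n}"
    using walk_closes by blast
  then show ?thesis
    by (simp add: component_walk walk_induces_cycle card_image)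
qed

lemma automorphism_image_component:
  assumes "g \<in> automorphisms E" "g ` S = S"
  shows "g ` component E S u \<subseteq> component E S (g u)"
proof
  fix v' assume "v' \<in> g ` component E S u"
  then obtain v where v: "v' = g v" "(induced_adj E S)\<^sup>*\<^sup>* u v"
    unfolding component_def by auto
  have "(induced_adj E S)\<^sup>*\<^sup>* (g u) (g v)"
    using v(2)
  proof (induction rule: rtranclp_induct)
    case (step a b)
    have "E (g a) (g b)"
      using automorphism_adj[OF assms(1)] step(2) by (simp add: induced_adj_def)
    moreover have "g a \<in> S" "g b \<in> S"
      using assms(2) step(2) by (auto simp: induced_adj_def)
    ultimately have "induced_adj E S (g a) (g b)"
      by (simp add: induced_adj_def)
    with step.IH show ?case by simp
  qed simp
  then show "v' \<in> component E S (g u)"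
    unfolding component_def v(1) by simp
qed

lemma union_of_equal_cycles_if_transitive:
  fixes E :: "'a::finite \<Rightarrow> 'a \<Rightarrow> bool"
  assumes "simple_graph E" "two_regular_induced E S"
    and transitive: "\<forall>x\<in>S. \<forall>y\<in>S. \<exists>g\<in>automorphisms E. g ` S = S \<and> g x = y"
  shows "union_of_equal_cycles E S"
proof (cases "S = {}")
  case False
  then obtain x0 where "x0 \<in> S" by blast
  have card_le: "card (component E S x) \<le> card (component E S y)"
    if "x \<in> S" "y \<in> S" for x y
  proof -
    obtain g where g: "g \<in> automorphisms E" "g ` S = S" "g x = y"
      using transitive \<open>x \<in> S\<close> \<open>y \<in> S\<close> by blast
    then have "inj g"
      by (simp add: automorphism_bij bij_is_inj)
    then have "card (component E S x) = card (g ` component E S x)"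
      by (simp add: card_image inj_on_subset)
    also have "\<dots> \<le> card (component E S y)"
      using automorphism_image_component[OF g(1,2), of x] g(3) by (simp add: card_mono)
    finally show ?thesis .
  qed
  show ?thesis
    unfolding union_of_equal_cycles_def
  proof (intro exI[of _ "card (component E S x0)"] ballI)
    fix x assume "x \<in> S"
    with \<open>x0 \<in> S\<close> have "card (component E S x) = card (component E S x0)"
      using card_le by (simp add: order_antisym)
    then show "induces_cycle E (component E S x) (card (component E S x0))"
      using component_induces_cycle[OF assms(1,2) \<open>x \<in> S\<close>] by simp
  qed
qed (simp add: union_of_equal_cycles_def)

section \<open>Sign vectors and the adjacency matrix\<close>

definition sign_vector :: "real^'a \<Rightarrow> bool" where
  "sign_vector w \<longleftrightarrow> (\<forall>x. w $ x = 1 \<or> w $ x = -1)"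

definition opposite_nbrs :: "('a \<Rightarrow> 'a \<Rightarrow> bool) \<Rightarrow> real^'a \<Rightarrow> 'a \<Rightarrow> 'a set" where
  "opposite_nbrs E w x = {y. E x y \<and> w $ y \<noteq> w $ x}"

lemma sign_vector_neq_iff:
  "sign_vector w \<Longrightarrow> w $ y \<noteq> w $ x \<longleftrightarrow> w $ y = - w $ x"
  unfolding sign_vector_def by (metis equation_minus_iff one_neq_neg_one)

lemma adj_matrix_mult_vec_nth:
  "(adj_matrix E *v w) $ x = (\<Sum>y | E x y. w $ y)"
proof -
  have "(\<Sum>y | E x y. w $ y) = (\<Sum>y\<in>UNIV. if E x y then w $ y else 0)"
    using sum.inter_filter[of UNIV "\<lambda>y. w $ y" "E x"] by simp
  then show ?thesis
    unfolding matrix_vector_mult_def adj_matrix_def by (auto intro: sum.cong)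
qed

lemma sign_vector_adj_mult_nth:
  assumes "sign_vector w"
  shows "(adj_matrix E *v w) $ x
           = (real (card {y. E x y}) - 2 * real (card (opposite_nbrs E w x))) * w $ x"
proof -
  let ?S = "{y. E x y \<and> w $ y = w $ x}" and ?D = "opposite_nbrs E w x"
  have nbrs: "{y. E x y} = ?S \<union> ?D" and disj: "?S \<inter> ?D = {}"
    unfolding opposite_nbrs_def by auto
  have "(adj_matrix E *v w) $ x = (\<Sum>y\<in>?S. w $ y) + (\<Sum>y\<in>?D. w $ y)"
    unfolding adj_matrix_mult_vec_nth nbrs by (rule sum.union_disjoint) (use disj in auto)
  also have "\<dots> = (\<Sum>y\<in>?S. w $ x) + (\<Sum>y\<in>?D. - w $ x)"
    using sign_vector_neq_iff[OF assms] by (intro arg_cong2[where f = "(+)"] sum.cong)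
      (auto simp: opposite_nbrs_def)
  also have "\<dots> = (real (card ?S) - real (card ?D)) * w $ x"
    by (simp add: algebra_simps)
  also have "card ?S = card {y. E x y} - card ?D"
    unfolding nbrs by (simp add: card_Un_disjoint disj)
  finally show ?thesis
    using card_mono[of "{y. E x y}" ?D] by (simp add: nbrs of_nat_diff algebra_simps)
qed

lemma cubic_sign_vector_eigen_iff:
  assumes "cubic E" "sign_vector w"
  shows "adj_matrix E *v w = w \<longleftrightarrow> (\<forall>x. card (opposite_nbrs E w x) = 1)"
proof -
  have "w $ x \<noteq> 0" for x
    using assms(2) unfolding sign_vector_def by (metis zero_neq_neg_one zero_neq_one)
  then have "(adj_matrix E *v w) $ x = w $ x \<longleftrightarrow> card (opposite_nbrs E w x) = 1" for x
    using assms(1) unfolding sign_vector_adj_mult_nth[OF assms(2)] cubic_def by auto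
  then show ?thesis by (simp add: vec_eq_iff)
qed

lemma simple_eigenvalue_sign_vectors:
  fixes z w :: "real^'n"
  assumes "simple_eigenvalue A c" "A *v z = c *\<^sub>R z" "A *v w = c *\<^sub>R w"
    and "sign_vector z" "sign_vector w"
  shows "w = z \<or> w = -z"
proof -
  obtain x :: 'n where True by simp
  have "z $ x \<noteq> 0" using assms(4) unfolding sign_vector_def by (metis zero_neq_neg_one zero_neq_one)
  then have "independent {z}" by (auto simp: independent_insert)
  moreover have "z \<in> eigenspace A c" "w \<in> eigenspace A c"
    using assms(2,3) by (auto simp: eigenspace_def)
  ultimately have "eigenspace A c \<subseteq> span {z}"
    using assms(1) by (intro card_ge_dim_independent) (auto simp: simple_eigenvalue_def)
  with \<open>w \<in> eigenspace A c\<close> obtain t where t: "w = t *\<^sub>R z"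
    by (auto simp: span_singleton)
  then have "w $ x = t * z $ x" by simp
  then have "t = 1 \<or> t = -1"
    using assms(4,5) unfolding sign_vector_def by (metis minus_equation_iff mult_minus_right mult.right_neutral)
  with t show ?thesis by auto
qed

lemma adj_matrix_mult_automorphism:
  assumes "g \<in> automorphisms E"
  shows "adj_matrix E *v (\<chi> x. w $ g x) = (\<chi> x. (adj_matrix E *v w) $ g x)"
proof -
  have g: "bij g" "\<And>x y. E x y \<longleftrightarrow> E (g x) (g y)"
    using assms by (auto simp: automorphisms_def)
  have "g ` {y. E x y} = {y. E (g x) y}" for x
    using g by (auto simp: image_iff) (metis bij_pointE)
  then have "(\<Sum>y | E x y. w $ g y) = (\<Sum>y | E (g x) y. w $ y)" for x
    using sum.reindex[of g "{y. E x y}" "\<lambda>y. w $ y"] inj_on_subset[OF bij_is_inj[OF g(1)]]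
    by simp
  then show ?thesis by (simp add: vec_eq_iff adj_matrix_mult_vec_nth)
qed

section \<open>A sign eigenvector for the eigenvalue 1 of a cubic graph\<close>

definition signed_indicator :: "'a set \<Rightarrow> real^'a" where
  "signed_indicator P = (\<chi> x. if x \<in> P then 1 else -1)"

lemma sign_vector_signed_indicator: "sign_vector (signed_indicator P)"
  by (simp add: sign_vector_def signed_indicator_def)

lemma two_regular_partition_eigenvector:
  assumes "cubic E" "two_partition P Q" "two_regular_induced E P" "two_regular_induced E Q"
  shows "adj_matrix E *v signed_indicator P = signed_indicator P"
proof -
  have "card (opposite_nbrs E (signed_indicator P) x) = 1" for x
  proof -
    obtain C where C: "x \<in> C" "two_regular_induced E C" "C = P \<or> C = Q"
      using assms(2-4) unfolding two_partition_def by blast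
    have "opposite_nbrs E (signed_indicator P) x = {y. E x y} - {y\<in>C. E x y}"
      using C assms(2) by (auto simp: opposite_nbrs_def signed_indicator_def two_partition_def)
    moreover have "card {y\<in>C. E x y} = 2"
      using C by (simp add: two_regular_induced_def)
    moreover have "card ({y. E x y} - {y\<in>C. E x y}) = card {y. E x y} - card {y\<in>C. E x y}"
      by (rule card_Diff_subset) auto
    ultimately show ?thesis
      using assms(1) by (simp add: cubic_def)
  qed
  then show ?thesis
    using cubic_sign_vector_eigen_iff[OF assms(1) sign_vector_signed_indicator] by blast
qed

locale cubic_sign_eigenvector =
  fixes E :: "'a::finite \<Rightarrow> 'a \<Rightarrow> bool" and z :: "real^'a"
  assumes simple: "simple_graph E" and cubic: "cubic E"
    and simple_eigenvalue: "simple_eigenvalue (adj_matrix E) 1"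
    and eigen: "adj_matrix E *v z = z" and sign: "sign_vector z"
begin

abbreviation Vplus :: "'a set" where
  "Vplus \<equiv> {x. z $ x = 1}"

abbreviation Vminus :: "'a set" where
  "Vminus \<equiv> {x. z $ x = -1}"

abbreviation cut_edges :: "'a set set" where
  "cut_edges \<equiv> {{x, y} | x y. E x y \<and> z $ x = 1 \<and> z $ y = -1}"

lemma unique_opposite_nbr: "\<exists>y. opposite_nbrs E z x = {y}"
  using cubic_sign_vector_eigen_iff[OF cubic sign] eigen by (metis card_1_singletonE)

lemma sign_eq_pm: "z $ x = 1 \<or> z $ x = -1"
  using sign by (simp add: sign_vector_def)

lemma sign_vector_eq_or_neg:
  assumes "sign_vector w" "adj_matrix E *v w = w"
  shows "w = z \<or> w = -z"
  using simple_eigenvalue_sign_vectors[OF simple_eigenvalue _ _ sign assms(1)] eigen assms(2)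
  by simp

lemma automorphism_sign:
  assumes "g \<in> automorphisms E"
  shows "(\<forall>x. z $ g x = z $ x) \<or> (\<forall>x. z $ g x = - z $ x)"
proof -
  have "sign_vector (\<chi> x. z $ g x)"
    using sign by (simp add: sign_vector_def)
  moreover have "adj_matrix E *v (\<chi> x. z $ g x) = (\<chi> x. z $ g x)"
    using adj_matrix_mult_automorphism[OF assms] eigen by simp
  ultimately have "(\<chi> x. z $ g x) = z \<or> (\<chi> x. z $ g x) = -z"
    by (rule sign_vector_eq_or_neg)
  then show ?thesis
    by (simp add: vec_eq_iff)
qed

lemma automorphism_sign_change:
  assumes "g \<in> automorphisms E"
  shows "z $ g x \<noteq> z $ g y \<longleftrightarrow> z $ x \<noteq> z $ y"
  using automorphism_sign[OF assms] by auto

lemma automorphism_image_levels: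
  assumes "g \<in> automorphisms E"
  shows "(g ` Vplus = Vplus \<and> g ` Vminus = Vminus) \<or> (g ` Vplus = Vminus \<and> g ` Vminus = Vplus)"
proof -
  have surj: "g ` (g -` A) = A" for A
    using automorphism_bij[OF assms] by (simp add: bij_is_surj surj_image_vimage_eq)
  from automorphism_sign[OF assms] show ?thesis
  proof
    assume "\<forall>x. z $ g x = z $ x"
    then have "g -` Vplus = Vplus" "g -` Vminus = Vminus" by auto
    then show ?thesis using surj by metis
  next
    assume "\<forall>x. z $ g x = - z $ x"
    then have "g -` Vminus = Vplus" "g -` Vplus = Vminus" by auto
    then show ?thesis using surj by metis
  qed
qed

lemma levels_two_partition: "two_partition Vplus Vminus"
proof -
  obtain x :: 'a where True by simp
  obtain y where "y \<in> opposite_nbrs E z x"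
    using unique_opposite_nbr by blast
  then have "z $ y \<noteq> z $ x"
    by (simp add: opposite_nbrs_def)
  then have "Vplus \<noteq> {} \<and> Vminus \<noteq> {}"
    using sign_eq_pm[of x] sign_eq_pm[of y] by (metis (mono_tags) empty_Collect_eq)
  then show ?thesis
    unfolding two_partition_def using sign_eq_pm by auto
qed

lemma levels_two_regular:
  assumes "P = Vplus \<or> P = Vminus"
  shows "two_regular_induced E P"
  unfolding two_regular_induced_def
proof
  fix x assume "x \<in> P"
  obtain y where y: "opposite_nbrs E z x = {y}"
    using unique_opposite_nbr by blast
  have "{y\<in>P. E x y} = {y. E x y} - opposite_nbrs E z x"
    using assms \<open>x \<in> P\<close> sign_eq_pm by (auto simp: opposite_nbrs_def)
  moreover have "E x y"
    using y by (auto simp: opposite_nbrs_def)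
  ultimately show "card {y\<in>P. E x y} = 2"
    using cubic y by (simp add: cubic_def card_Diff_singleton)
qed

lemma levels_blocks:
  assumes "P = Vplus \<or> P = Vminus"
  shows "block (automorphisms E) P"
  unfolding block_def
proof
  show "P \<noteq> {}"
    using assms levels_two_partition by (auto simp: two_partition_def)
  have "Vplus \<inter> Vminus = {}"
    by auto
  then show "\<forall>g\<in>automorphisms E. g ` P = P \<or> g ` P \<inter> P = {}"
    using assms automorphism_image_levels by (simp add: Int_commute) blast
qed

lemma unique_two_regular_partition:
  assumes "two_partition P Q" "two_regular_induced E P" "two_regular_induced E Q"
  shows "{P, Q} = {Vplus, Vminus}"
proof -
  have "adj_matrix E *v signed_indicator P = signed_indicator P"
    using two_regular_partition_eigenvector[OF cubic assms] .
  then consider "z = signed_indicator P" | "z = - signed_indicator P"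
    using sign_vector_eq_or_neg sign_vector_signed_indicator by force
  moreover have "Q = - P"
    using assms(1) unfolding two_partition_def by auto
  moreover have "{x. signed_indicator P $ x = 1} = P" "{x. signed_indicator P $ x = -1} = - P"
    "{x. - signed_indicator P $ x = 1} = - P" "{x. - signed_indicator P $ x = -1} = P"
    by (auto simp: signed_indicator_def)
  ultimately show ?thesis
    by cases (simp_all add: insert_commute)
qed

lemma levels_image:
  assumes "g \<in> automorphisms E" "P = Vplus \<or> P = Vminus" "Q = Vplus \<or> Q = Vminus" "x \<in> P" "g x \<in> Q"
  shows "g ` P = Q"
proof -
  have "g ` P = Vplus \<or> g ` P = Vminus"
    using automorphism_image_levels[OF assms(1)] assms(2) by blast
  moreover have "g x \<in> g ` P \<inter> Q"
    using assms(4,5) by blast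
  moreover have "Vplus \<inter> Vminus = {}"
    by auto
  ultimately show ?thesis
    using assms(3) by auto
qed

lemma levels_union_of_equal_cycles:
  assumes "vertex_transitive E" "P = Vplus \<or> P = Vminus"
  shows "union_of_equal_cycles E P"
proof (rule union_of_equal_cycles_if_transitive[OF simple levels_two_regular[OF assms(2)]])
  show "\<forall>x\<in>P. \<forall>y\<in>P. \<exists>g\<in>automorphisms E. g ` P = P \<and> g x = y"
  proof (intro ballI)
    fix x y assume "x \<in> P" "y \<in> P"
    obtain g where "g \<in> automorphisms E" "g x = y"
      using assms(1) unfolding vertex_transitive_def by blast
    then show "\<exists>g\<in>automorphisms E. g ` P = P \<and> g x = y"
      using levels_image[OF _ assms(2) assms(2) \<open>x \<in> P\<close>] \<open>y \<in> P\<close> by auto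
  qed
qed

lemma levels_isomorphic:
  assumes "vertex_transitive E"
  shows "induced_isomorphic E Vplus Vminus"
proof -
  obtain p m where "p \<in> Vplus" "m \<in> Vminus"
    using levels_two_partition unfolding two_partition_def by blast
  moreover obtain g where g: "g \<in> automorphisms E" "g p = m"
    using assms unfolding vertex_transitive_def by blast
  ultimately have "g ` Vplus = Vminus"
    using levels_image by blast
  moreover have "inj g"
    using automorphism_bij[OF g(1)] by (rule bij_is_inj)
  ultimately have "bij_betw g Vplus Vminus"
    using inj_on_subset[of g UNIV Vplus] by (simp add: bij_betw_imageI)
  then show ?thesis
    unfolding induced_isomorphic_def using automorphism_adj[OF g(1)] by blast
qed

lemma cut_edge_iff: "{x, y} \<in> cut_edges \<longleftrightarrow> y \<in> opposite_nbrs E z x"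
proof
  assume "{x, y} \<in> cut_edges"
  then obtain a b where "{x, y} = {a, b}" "E a b" "z $ a = 1" "z $ b = -1"
    by blast
  then show "y \<in> opposite_nbrs E z x"
    using simple_graph_sym[OF simple] by (auto simp: doubleton_eq_iff opposite_nbrs_def)
next
  assume "y \<in> opposite_nbrs E z x"
  then have "E x y" "E y x" "z $ x = 1 \<and> z $ y = -1 \<or> z $ y = 1 \<and> z $ x = -1"
    using simple_graph_sym[OF simple] sign_eq_pm[of x] sign_eq_pm[of y]
    by (auto simp: opposite_nbrs_def)
  then show "{x, y} \<in> cut_edges"
    by (auto simp: insert_commute)
qed

lemma cut_edge_elem: "e \<in> cut_edges \<Longrightarrow> v \<in> e \<Longrightarrow> \<exists>u. e = {v, u}"
  by (auto simp: insert_commute)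

lemma cut_edges_perfect_matching: "perfect_matching E cut_edges"
  unfolding perfect_matching_def
proof (intro conjI allI)
  show "cut_edges \<subseteq> edges E"
    by (auto simp: edges_def)
  fix v
  obtain u where u: "opposite_nbrs E z v = {u}"
    using unique_opposite_nbr by blast
  show "\<exists>!e. e \<in> cut_edges \<and> v \<in> e"
  proof (rule ex1I[of _ "{v, u}"])
    show "{v, u} \<in> cut_edges \<and> v \<in> {v, u}"
      using u cut_edge_iff by simp
  next
    fix e assume "e \<in> cut_edges \<and> v \<in> e"
    then obtain y where "e = {v, y}" "{v, y} \<in> cut_edges"
      using cut_edge_elem by blast
    then show "e = {v, u}"
      using u cut_edge_iff by simp
  qed
qed

lemma automorphism_opposite_nbrs:
  assumes "g \<in> automorphisms E" "y \<in> opposite_nbrs E z x"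
  shows "g y \<in> opposite_nbrs E z (g x)"
  using assms(2) automorphism_adj[OF assms(1)] automorphism_sign_change[OF assms(1)]
  by (simp add: opposite_nbrs_def)

lemma automorphism_fixes_cut_edges:
  assumes "g \<in> automorphisms E"
  shows "(\<lambda>e. g ` e) ` cut_edges = cut_edges"
proof (rule card_subset_eq)
  show "(\<lambda>e. g ` e) ` cut_edges \<subseteq> cut_edges"
  proof
    fix e' assume "e' \<in> (\<lambda>e. g ` e) ` cut_edges"
    then obtain x y where "e' = {g x, g y}" "{x, y} \<in> cut_edges"
      by blast
    then show "e' \<in> cut_edges"
      using automorphism_opposite_nbrs[OF assms] cut_edge_iff by simp
  qed
  have "inj g"
    using automorphism_bij[OF assms] by (rule bij_is_inj)
  then have "inj_on (\<lambda>e. g ` e) cut_edges"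
    by (simp add: inj_on_def inj_image_eq_iff)
  then show "card ((\<lambda>e. g ` e) ` cut_edges) = card cut_edges"
    by (rule card_image)
qed simp

lemma cut_arcs_transitive:
  assumes "vertex_transitive E" "{x, y} \<in> cut_edges" "{x', y'} \<in> cut_edges"
  shows "\<exists>g\<in>automorphisms E. g x = x' \<and> g y = y'"
proof -
  obtain g where g: "g \<in> automorphisms E" "g x = x'"
    using assms(1) unfolding vertex_transitive_def by blast
  moreover have "g y \<in> opposite_nbrs E z x'" "y' \<in> opposite_nbrs E z x'"
    using automorphism_opposite_nbrs[OF g(1)] assms(2,3) g(2) cut_edge_iff by auto
  ultimately show ?thesis
    using unique_opposite_nbr[of x'] by auto
qed

end

theorem lemma4p1:
  fixes E :: "'a::finite \<Rightarrow> 'a \<Rightarrow> bool" and z :: "real^'a"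
  assumes "simple_graph E" and "cubic E" and "vertex_transitive E"
    and "simple_eigenvalue (adj_matrix E) 1"
    and "adj_matrix E *v z = z"
    and "\<forall>x. z $ x = 1 \<or> z $ x = -1"
  defines "Vp \<equiv> {x. z $ x = 1}" and "Vm \<equiv> {x. z $ x = -1}"
    and "M \<equiv> {{x, y} | x y. E x y \<and> z $ x = 1 \<and> z $ y = -1}"
  shows "union_of_equal_cycles E Vp
    \<and> (induced_isomorphic E Vp Vm \<and> block (automorphisms E) Vp \<and> block (automorphisms E) Vm)
    \<and> (two_partition Vp Vm \<and> two_regular_induced E Vp \<and> two_regular_induced E Vm
       \<and> (\<forall>P Q. two_partition P Q \<and> two_regular_induced E P \<and> two_regular_induced E Q
                \<longrightarrow> {P, Q} = {Vp, Vm}))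
    \<and> perfect_matching E M
    \<and> (\<forall>g\<in>automorphisms E. (\<lambda>e. g ` e) ` M = M)
    \<and> (\<forall>x y x' y'. {x, y} \<in> M \<and> {x', y'} \<in> M \<and> x \<noteq> y \<and> x' \<noteq> y'
         \<longrightarrow> (\<exists>g\<in>automorphisms E. g x = x' \<and> g y = y'))"
proof -
  interpret cubic_sign_eigenvector E z
    using assms(1,2,4-6) by unfold_locales (simp_all add: sign_vector_def)
  have "union_of_equal_cycles E Vp"
    unfolding Vp_def by (rule levels_union_of_equal_cycles[OF assms(3)]) simp
  moreover have "induced_isomorphic E Vp Vm"
    unfolding Vp_def Vm_def by (rule levels_isomorphic[OF assms(3)])
  moreover have "block (automorphisms E) Vp" "block (automorphisms E) Vm"
    unfolding Vp_def Vm_def by (simp_all add: levels_blocks)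
  moreover have "two_partition Vp Vm"
    unfolding Vp_def Vm_def by (rule levels_two_partition)
  moreover have "two_regular_induced E Vp" "two_regular_induced E Vm"
    unfolding Vp_def Vm_def by (simp_all add: levels_two_regular)
  moreover have "{P, Q} = {Vp, Vm}"
    if "two_partition P Q" "two_regular_induced E P" "two_regular_induced E Q" for P Q
    unfolding Vp_def Vm_def using that by (rule unique_two_regular_partition)
  moreover have "perfect_matching E M"
    unfolding M_def by (rule cut_edges_perfect_matching)
  moreover have "(\<lambda>e. g ` e) ` M = M" if "g \<in> automorphisms E" for g
    unfolding M_def using that by (rule automorphism_fixes_cut_edges)
  moreover have "\<exists>g\<in>automorphisms E. g x = x' \<and> g y = y'"
    if "{x, y} \<in> M" "{x', y'} \<in> M" for x y x' y'
    using that unfolding M_def by (rule cut_arcs_transitive[OF assms(3)])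
  ultimately show ?thesis
    by (intro conjI allI impI ballI; (elim conjE)?; metis)
qed

end
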